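(* There is an absolute constant $c>0$ such that for any two disjoint finite point sets $P,S$ in the plane with $P\cup S$ generic, every edge $e$ of $T_P$ crosses at most $c$ edges of $T_S$ whose length is at least the length of $e$.
   Context: A finite planar point set is in general position if no three of its points are collinear; it is generic if it is in general position and every subset has a unique Euclidean minimum spanning tree (MST). For a generic set $X$, $T_X$ denotes its MST, with edges drawn as straight segments. *)

theory Defs
  imports "HOL-Analysis.Analysis"
begin

type_synonym point = "real^2"

definition edges_on :: "point set \<Rightarrow> point set set" where
  "edges_on X = {{a, b} | a b. a \<in> X \<and> b \<in> X \<and> a \<noteq> b}"

definition edge_len :: "point set \<Rightarrow> real" where
  "edge_len e = Max {dist a b | a b. a \<in> e \<and> b \<in> e}"

definition edge_rel :: "point set set \<Rightarrow> (point \<times> point) set" where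
  "edge_rel E = {(a, b). {a, b} \<in> E}"

text \<open>Spanning tree: connected, with |X|-1 edges (hence acyclic).\<close>
definition is_spanning_tree :: "point set \<Rightarrow> point set set \<Rightarrow> bool" where
  "is_spanning_tree X E \<longleftrightarrow>
     E \<subseteq> edges_on X \<and>
     (\<forall>a\<in>X. \<forall>b\<in>X. (a, b) \<in> (edge_rel E)\<^sup>*) \<and>
     card E = card X - 1"

definition weight :: "point set set \<Rightarrow> real" where
  "weight E = (\<Sum>e\<in>E. edge_len e)"

definition is_MST :: "point set \<Rightarrow> point set set \<Rightarrow> bool" where
  "is_MST X E \<longleftrightarrow> is_spanning_tree X E \<and>
     (\<forall>E'. is_spanning_tree X E' \<longrightarrow> weight E \<le> weight E')"

definition general_position :: "point set \<Rightarrow> bool" where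
  "general_position X \<longleftrightarrow>
     (\<forall>a\<in>X. \<forall>b\<in>X. \<forall>c\<in>X. a \<noteq> b \<and> a \<noteq> c \<and> b \<noteq> c \<longrightarrow> \<not> collinear {a, b, c})"

definition generic :: "point set \<Rightarrow> bool" where
  "generic X \<longleftrightarrow> finite X \<and> general_position X \<and> (\<forall>Y\<subseteq>X. \<exists>!E. is_MST Y E)"

definition MST :: "point set \<Rightarrow> point set set" where
  "MST X = (THE E. is_MST X E)"

definition crosses :: "point set \<Rightarrow> point set \<Rightarrow> bool" where
  "crosses e f \<longleftrightarrow> convex hull e \<inter> convex hull f \<noteq> {}"

end

theory Submission
  imports Defs
begin

(* Let e = pq and let f range over the edges of T_S that cross e and are at least as long as e.
   Anchor each such f by orienting it as st so that a crossing point x lies on the half of f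
   next to s, and file f under the cell of x - p in a grid of mesh |e|/200 together with the
   cell of the unit vector (t - s)/|t - s| in a grid of mesh 1/200; only 401^4 cells occur. Two
   distinct edges in the same cell would be nearly parallel with nearby anchor points, so both
   endpoints of the longer one, f2, would be joined through the endpoints of the shorter one by
   segments no longer than f2, contradicting the cycle property of the unique MST of S. *)

section \<open>Connectivity of edge sets\<close>

lemma edge_len_pair: "edge_len {a, b} = dist a b"
proof -
  have "{dist x y |x y. x \<in> {a, b} \<and> y \<in> {a, b}} = {0, dist a b}"
    by (auto simp: dist_commute)
  then show ?thesis
    unfolding edge_len_def by (simp add: max_def)
qed

lemma finite_edges_on: "finite X \<Longrightarrow> finite (edges_on X)"
  by (rule finite_subset[of _ "Pow X"]) (auto simp: edges_on_def)

lemma edges_onE: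
  assumes "e \<in> edges_on X"
  obtains a b where "e = {a, b}" "a \<in> X" "b \<in> X" "a \<noteq> b"
  using assms unfolding edges_on_def by auto

lemma doubleton_in_edges_on_iff: "{a, b} \<in> edges_on X \<longleftrightarrow> a \<in> X \<and> b \<in> X \<and> a \<noteq> b"
  unfolding edges_on_def by (auto simp: doubleton_eq_iff)

lemma edge_rel_iff [simp]: "(a, b) \<in> edge_rel E \<longleftrightarrow> {a, b} \<in> E"
  unfolding edge_rel_def by simp

lemma rtrancl_edge_rel_mono: "E \<subseteq> F \<Longrightarrow> (edge_rel E)\<^sup>* \<subseteq> (edge_rel F)\<^sup>*"
  unfolding edge_rel_def by (intro rtrancl_mono) auto

lemma converse_edge_rel: "(edge_rel E)\<inverse> = edge_rel E"
  unfolding edge_rel_def by (auto simp: insert_commute)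

lemma rtrancl_edge_rel_sym: "(a, b) \<in> (edge_rel E)\<^sup>* \<Longrightarrow> (b, a) \<in> (edge_rel E)\<^sup>*"
  by (metis converse_edge_rel converseI rtrancl_converse)

lemma rtrancl_edge_rel_Diff_singleton: "(edge_rel (E - {{c}}))\<^sup>* = (edge_rel E)\<^sup>*"
proof
  have "edge_rel E - Id \<subseteq> edge_rel (E - {{c}})"
    unfolding edge_rel_def by auto
  then show "(edge_rel E)\<^sup>* \<subseteq> (edge_rel (E - {{c}}))\<^sup>*"
    using rtrancl_mono rtrancl_r_diff_Id by metis
qed (intro rtrancl_edge_rel_mono, blast)

lemma rtrancl_edge_rel_image:
  "(x, y) \<in> (edge_rel E)\<^sup>* \<Longrightarrow> (\<phi> x, \<phi> y) \<in> (edge_rel ((`) \<phi> ` E))\<^sup>*"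
proof (induction rule: rtrancl_induct)
  case (step y z)
  have "\<phi> ` {y, z} \<in> (`) \<phi> ` E"
    using step.hyps(2) by (intro imageI) simp
  then have "(\<phi> y, \<phi> z) \<in> edge_rel ((`) \<phi> ` E)"
    by simp
  with step.IH show ?case
    by (rule rtrancl_into_rtrancl)
qed simp

lemma rtrancl_exits_set:
  assumes "(x, y) \<in> R\<^sup>*" "x \<in> A" "y \<notin> A"
  obtains a b where "(a, b) \<in> R" "a \<in> A" "b \<notin> A"
  using assms by (induction rule: rtrancl_induct) blast+

lemma connected_edge_contraction:
  assumes "finite X" "E \<subseteq> edges_on X" "\<forall>x\<in>X. \<forall>y\<in>X. (x, y) \<in> (edge_rel E)\<^sup>*" "{a, b} \<in> E"
  obtains E' where "E' \<subseteq> edges_on (X - {b})" "\<forall>x\<in>X - {b}. \<forall>y\<in>X - {b}. (x, y) \<in> (edge_rel E')\<^sup>*"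
    "card E' < card E"
proof -
  have ab: "a \<in> X" "b \<in> X" "a \<noteq> b"
    using assms(2,4) doubleton_in_edges_on_iff by blast+
  define \<phi> where "\<phi> x = (if x = b then a else x)" for x
  define E' where "E' = (`) \<phi> ` E - {{a}}"
  have "finite E"
    using assms(1,2) finite_edges_on finite_subset by blast
  have "{a} \<in> (`) \<phi> ` E"
    using assms(4) by (intro image_eqI[of _ _ "{a, b}"]) (auto simp: \<phi>_def)
  then have "card E' = card ((`) \<phi> ` E) - 1"
    unfolding E'_def using \<open>finite E\<close> by (simp add: card_Diff_singleton)
  moreover have "card ((`) \<phi> ` E) \<le> card E"
    using \<open>finite E\<close> by (rule card_image_le)
  moreover have "card E \<noteq> 0"
    using assms(4) \<open>finite E\<close> by auto
  ultimately have "card E' < card E"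
    by linarith
  moreover have "E' \<subseteq> edges_on (X - {b})"
  proof
    fix e assume "e \<in> E'"
    then obtain e0 where e0: "e0 \<in> E" "e = \<phi> ` e0" "e \<noteq> {a}"
      unfolding E'_def by blast
    then obtain x y where "e0 = {x, y}" "{x, y} \<in> edges_on X"
      using assms(2) by (blast elim: edges_onE)
    then have e: "e = {\<phi> x, \<phi> y}" "e \<noteq> {a}" "{x, y} \<in> edges_on X"
      using e0 by auto
    then have "\<phi> x \<noteq> \<phi> y"
      by (auto simp: \<phi>_def doubleton_in_edges_on_iff split: if_splits)
    moreover have "\<phi> x \<in> X - {b}" "\<phi> y \<in> X - {b}"
      using e(3) ab by (auto simp: \<phi>_def doubleton_in_edges_on_iff)
    ultimately show "e \<in> edges_on (X - {b})"
      unfolding e(1) by (simp add: doubleton_in_edges_on_iff)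
  qed
  moreover have "\<forall>x\<in>X - {b}. \<forall>y\<in>X - {b}. (x, y) \<in> (edge_rel E')\<^sup>*"
  proof (intro ballI)
    fix x y assume "x \<in> X - {b}" "y \<in> X - {b}"
    then have "(\<phi> x, \<phi> y) \<in> (edge_rel ((`) \<phi> ` E))\<^sup>*"
      using assms(3) by (blast intro: rtrancl_edge_rel_image)
    moreover have "\<phi> x = x" "\<phi> y = y"
      using \<open>x \<in> X - {b}\<close> \<open>y \<in> X - {b}\<close> by (simp_all add: \<phi>_def)
    ultimately show "(x, y) \<in> (edge_rel E')\<^sup>*"
      unfolding E'_def rtrancl_edge_rel_Diff_singleton by simp
  qed
  ultimately show ?thesis
    using that by blast
qed

lemma card_le_Suc_card_edges_if_connected:
  assumes "finite X" "E \<subseteq> edges_on X" "\<forall>a\<in>X. \<forall>b\<in>X. (a, b) \<in> (edge_rel E)\<^sup>*"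
  shows "card X \<le> card E + 1"
  using assms
proof (induction "card X" arbitrary: X E rule: less_induct)
  case less
  show ?case
  proof (cases "card X \<le> 1")
    case False
    then obtain a0 b0 where "a0 \<in> X" "b0 \<in> X" "a0 \<noteq> b0"
      using card_le_Suc0_iff_eq[OF less.prems(1)] by auto
    then have "(a0, b0) \<in> edge_rel E O (edge_rel E)\<^sup>*"
      using less.prems(3) by (metis rtrancl_eq_or_trancl trancl_unfold_left)
    then obtain b where "{a0, b} \<in> E"
      by auto
    then obtain E' where "E' \<subseteq> edges_on (X - {b})"
      and "\<forall>x\<in>X - {b}. \<forall>y\<in>X - {b}. (x, y) \<in> (edge_rel E')\<^sup>*" and "card E' < card E"
      by (rule connected_edge_contraction[OF less.prems])
    moreover have "b \<in> X"
      using \<open>{a0, b} \<in> E\<close> less.prems(2) doubleton_in_edges_on_iff by blast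
    then have "card (X - {b}) < card X" "finite (X - {b})"
      using less.prems(1) False by auto
    ultimately have "card (X - {b}) \<le> card E' + 1"
      using less.hyps by blast
    then show ?thesis
      using \<open>card E' < card E\<close> \<open>b \<in> X\<close> less.prems(1) by simp
  qed simp
qed

section \<open>Minimum spanning trees\<close>

lemma finite_spanning_tree_edges: "finite X \<Longrightarrow> is_spanning_tree X E \<Longrightarrow> finite E"
  unfolding is_spanning_tree_def using finite_edges_on finite_subset by blast

lemma spanning_tree_Diff_edge_disconnected:
  assumes "finite X" "is_spanning_tree X E" "{s, t} \<in> E"
  shows "(s, t) \<notin> (edge_rel (E - {{s, t}}))\<^sup>*"
proof
  let ?E0 = "E - {{s, t}}"
  assume st: "(s, t) \<in> (edge_rel ?E0)\<^sup>*"
  have E: "E \<subseteq> edges_on X" "\<forall>a\<in>X. \<forall>b\<in>X. (a, b) \<in> (edge_rel E)\<^sup>*" "card E = card X - 1"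
    using assms(2) unfolding is_spanning_tree_def by auto
  have "edge_rel E \<subseteq> (edge_rel ?E0)\<^sup>*"
  proof (rule subrelI)
    fix a b assume "(a, b) \<in> edge_rel E"
    then show "(a, b) \<in> (edge_rel ?E0)\<^sup>*"
      using st rtrancl_edge_rel_sym[OF st] by (cases "{a, b} = {s, t}") (auto simp: doubleton_eq_iff)
  qed
  then have "(edge_rel E)\<^sup>* \<subseteq> (edge_rel ?E0)\<^sup>*"
    by (rule rtrancl_subset_rtrancl)
  then have "card X \<le> card ?E0 + 1"
    using E assms(1) by (intro card_le_Suc_card_edges_if_connected) auto
  moreover have "card ?E0 = card E - 1" "card E \<noteq> 0"
    using assms finite_spanning_tree_edges by auto
  ultimately show False
    using E(3) by linarith
qed

lemma spanning_tree_Diff_edge_reaches: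
  assumes "is_spanning_tree X E" "{s, t} \<in> E" "v \<in> X"
  shows "(s, v) \<in> (edge_rel (E - {{s, t}}))\<^sup>* \<or> (t, v) \<in> (edge_rel (E - {{s, t}}))\<^sup>*"
proof -
  have "s \<in> X"
    using assms(1,2) unfolding is_spanning_tree_def by (auto simp: doubleton_in_edges_on_iff)
  then have "(s, v) \<in> (edge_rel E)\<^sup>*"
    using assms(1,3) unfolding is_spanning_tree_def by blast
  then show ?thesis
  proof (induction rule: rtrancl_induct)
    case (step y z)
    then show ?case
      by (cases "{y, z} = {s, t}") (auto simp: doubleton_eq_iff intro: rtrancl_into_rtrancl)
  qed simp
qed

lemma spanning_tree_exchange:
  assumes "finite X" "is_spanning_tree X E" "{s, t} \<in> E" "{a, b} \<in> edges_on X" "{a, b} \<noteq> {s, t}"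
    and "(s, a) \<in> (edge_rel (E - {{s, t}}))\<^sup>*" "(s, b) \<notin> (edge_rel (E - {{s, t}}))\<^sup>*"
  shows "is_spanning_tree X (insert {a, b} (E - {{s, t}}))" "{a, b} \<notin> E"
proof -
  define E0 where "E0 = E - {{s, t}}"
  define E' where "E' = insert {a, b} E0"
  have reach: "(s, v) \<in> (edge_rel E0)\<^sup>* \<or> (t, v) \<in> (edge_rel E0)\<^sup>*" if "v \<in> X" for v
    using spanning_tree_Diff_edge_reaches[OF assms(2,3) that] unfolding E0_def .
  have "{a, b} \<notin> E0"
  proof
    assume "{a, b} \<in> E0"
    then have "(s, b) \<in> (edge_rel E0)\<^sup>*"
      using assms(6) unfolding E0_def by (metis edge_rel_iff rtrancl_into_rtrancl)
    then show False
      using assms(7) unfolding E0_def by blast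
  qed
  then show "{a, b} \<notin> E"
    using assms(5) unfolding E0_def by blast
  have mono: "(edge_rel E0)\<^sup>* \<subseteq> (edge_rel E')\<^sup>*"
    unfolding E'_def by (intro rtrancl_edge_rel_mono) blast
  have "(s, b) \<in> (edge_rel E')\<^sup>*"
    using assms(6) mono rtrancl_into_rtrancl[of s a "edge_rel E'" b]
    unfolding E'_def E0_def by auto
  moreover have "(t, b) \<in> (edge_rel E')\<^sup>*"
    using reach[of b] assms(4,7) mono unfolding E0_def by (auto simp: doubleton_in_edges_on_iff)
  ultimately have "(s, t) \<in> (edge_rel E')\<^sup>*"
    by (meson rtrancl_edge_rel_sym rtrancl_trans)
  then have from_s: "(s, v) \<in> (edge_rel E')\<^sup>*" if "v \<in> X" for v
    using reach[OF that] mono by (meson rtrancl_trans subsetD)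
  have "finite E"
    using assms(1,2) by (rule finite_spanning_tree_edges)
  then have "card E' = Suc (card E0)"
    using \<open>{a, b} \<notin> E0\<close> unfolding E'_def E0_def by simp
  also have "\<dots> = card E"
    using card_Suc_Diff1[OF \<open>finite E\<close> assms(3)] unfolding E0_def .
  finally have "card E' = card E" .
  moreover have "E' \<subseteq> edges_on X"
    using assms(2,4) unfolding E'_def E0_def is_spanning_tree_def by blast
  ultimately show "is_spanning_tree X (insert {a, b} (E - {{s, t}}))"
    using assms(2) from_s rtrancl_edge_rel_sym rtrancl_trans
    unfolding is_spanning_tree_def E'_def E0_def by metis
qed

lemma is_MST_MST: "\<exists>!E. is_MST X E \<Longrightarrow> is_MST X (MST X)"
  unfolding MST_def by (rule theI')

lemma MST_unique: "\<exists>!E. is_MST X E \<Longrightarrow> is_MST X E \<Longrightarrow> E = MST X"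
  using is_MST_MST by blast

lemma MST_subset_edges_on:
  assumes "\<exists>!E. is_MST X E"
  shows "MST X \<subseteq> edges_on X"
  using is_MST_MST[OF assms] unfolding is_MST_def is_spanning_tree_def by blast

definition no_longer_edges :: "point set \<Rightarrow> point \<Rightarrow> point \<Rightarrow> point set set" where
  "no_longer_edges X s t = {f \<in> edges_on X - {{s, t}}. edge_len f \<le> dist s t}"

lemma MST_cycle_property:
  assumes "finite X" "\<exists>!E. is_MST X E" "{s, t} \<in> MST X"
  shows "(s, t) \<notin> (edge_rel (no_longer_edges X s t))\<^sup>*"
proof
  define E0 where "E0 = MST X - {{s, t}}"
  define A where "A = (edge_rel E0)\<^sup>* `` {s}"
  have mst: "is_MST X (MST X)" and tree: "is_spanning_tree X (MST X)"
    using is_MST_MST[OF assms(2)] unfolding is_MST_def by auto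
  assume "(s, t) \<in> (edge_rel (no_longer_edges X s t))\<^sup>*"
  moreover have "s \<in> A" "t \<notin> A"
    using spanning_tree_Diff_edge_disconnected[OF assms(1) tree assms(3)] unfolding A_def E0_def by auto
  ultimately obtain a b where ab: "{a, b} \<in> edges_on X" "{a, b} \<noteq> {s, t}" "dist a b \<le> dist s t"
    and "a \<in> A" "b \<notin> A"
    by (elim rtrancl_exits_set) (auto simp: no_longer_edges_def edge_len_pair)
  then have sa: "(s, a) \<in> (edge_rel E0)\<^sup>*" and sb: "(s, b) \<notin> (edge_rel E0)\<^sup>*"
    unfolding A_def by auto
  define E' where "E' = insert {a, b} E0"
  have tree': "is_spanning_tree X E'" and "{a, b} \<notin> MST X"
    using spanning_tree_exchange[OF assms(1) tree assms(3) ab(1,2)] sa sb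
    unfolding E'_def E0_def by auto
  have "finite E0"
    using finite_spanning_tree_edges[OF assms(1) tree] unfolding E0_def by blast
  then have "weight E' = dist a b + weight E0"
    using \<open>{a, b} \<notin> MST X\<close> unfolding weight_def E'_def E0_def by (simp add: edge_len_pair)
  moreover have "weight (MST X) = dist s t + weight E0"
    using finite_spanning_tree_edges[OF assms(1) tree] assms(3)
    unfolding weight_def E0_def by (simp add: sum.remove edge_len_pair)
  ultimately have "is_MST X E'"
    using mst tree' ab(3) unfolding is_MST_def by fastforce
  then have "E' = MST X"
    using assms(2) by (rule MST_unique[rotated])
  then show False
    using \<open>{a, b} \<notin> MST X\<close> unfolding E'_def by blast
qed

section \<open>Nearly parallel segments\<close>

lemma diff_eq_dist_scaleR_sgn: "t - s = dist s t *\<^sub>R sgn (t - s)"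
  for s t :: "'a::real_normed_vector"
  by (cases "s = t") (simp_all add: sgn_div_norm dist_norm norm_minus_commute)

lemma closed_segment_eq_halves:
  fixes s t :: "'a::euclidean_space"
  shows "closed_segment s t = closed_segment s (midpoint s t) \<union> closed_segment t (midpoint s t)"
  by (metis Un_closed_segment closed_segment_commute midpoint_in_closed_segment)

lemma in_first_half_segmentE:
  fixes s t x :: "'a::real_normed_vector"
  assumes "x \<in> closed_segment s (midpoint s t)"
  obtains a where "0 \<le> a" "a \<le> dist s t / 2" "x = s + a *\<^sub>R sgn (t - s)"
proof -
  obtain u where u: "0 \<le> u" "u \<le> 1" "x = (1 - u) *\<^sub>R s + u *\<^sub>R midpoint s t"
    using assms unfolding in_segment by blast
  have "x = s + (u / 2) *\<^sub>R (t - s)"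
    unfolding u(3) midpoint_def by (simp add: algebra_simps flip: scaleR_add_left)
  also have "\<dots> = s + (u / 2 * dist s t) *\<^sub>R sgn (t - s)"
    by (subst diff_eq_dist_scaleR_sgn) simp
  finally have "x = s + (u / 2 * dist s t) *\<^sub>R sgn (t - s)" .
  moreover have "u * dist s t \<le> dist s t"
    using u(1,2) by (intro mult_left_le_one_le) simp_all
  ultimately show ?thesis
    using u(1) that[of "u / 2 * dist s t"] by simp
qed

lemma dist_along_unit_vector_le:
  fixes s u e :: "'a::real_normed_vector"
  assumes "norm u = 1"
  shows "dist (s + r *\<^sub>R u + e) (s + r' *\<^sub>R u) \<le> \<bar>r - r'\<bar> + norm e"
proof -
  have "dist (s + r *\<^sub>R u + e) (s + r' *\<^sub>R u) = norm ((r - r') *\<^sub>R u + e)"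
    by (simp add: dist_norm algebra_simps)
  also have "\<dots> \<le> norm ((r - r') *\<^sub>R u) + norm e"
    by (rule norm_triangle_ineq)
  finally show ?thesis
    using assms by simp
qed

lemma nearly_parallel_half_segments_coordinates:
  fixes s1 t1 s2 t2 x1 x2 :: "'a::real_normed_vector"
  assumes "s1 \<noteq> t1" "dist s1 t1 \<le> dist s2 t2"
    and "x1 \<in> closed_segment s1 (midpoint s1 t1)" "x2 \<in> closed_segment s2 (midpoint s2 t2)"
    and "dist x1 x2 \<le> dist s1 t1 / 100" "dist (sgn (t1 - s1)) (sgn (t2 - s2)) \<le> 1 / 100"
  obtains \<sigma> es et where "s1 = s2 + \<sigma> *\<^sub>R sgn (t2 - s2) + es"
    "t1 = s2 + (\<sigma> + dist s1 t1) *\<^sub>R sgn (t2 - s2) + et"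
    "- dist s1 t1 / 2 \<le> \<sigma>" "\<sigma> \<le> dist s2 t2 / 2"
    "norm es \<le> 3 * dist s1 t1 / 200" "norm et \<le> dist s1 t1 / 40"
proof -
  define L1 L2 u1 u2
    where "L1 = dist s1 t1" and "L2 = dist s2 t2" and "u1 = sgn (t1 - s1)" and "u2 = sgn (t2 - s2)"
  obtain a1 where a1: "0 \<le> a1" "a1 \<le> L1 / 2" "x1 = s1 + a1 *\<^sub>R u1"
    using in_first_half_segmentE[OF assms(3)] unfolding L1_def u1_def by blast
  obtain a2 where a2: "0 \<le> a2" "a2 \<le> L2 / 2" "x2 = s2 + a2 *\<^sub>R u2"
    using in_first_half_segmentE[OF assms(4)] unfolding L2_def u2_def by blast
  have "0 < L1"
    using assms(1) unfolding L1_def by simp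
  have du: "norm (u1 - u2) \<le> 1 / 100"
    using assms(6) unfolding u1_def u2_def dist_norm .
  define \<sigma> es et
    where "\<sigma> = a2 - a1" and "es = s1 - (s2 + \<sigma> *\<^sub>R u2)" and "et = t1 - (s2 + (\<sigma> + L1) *\<^sub>R u2)"
  have "es = (x1 - x2) - a1 *\<^sub>R (u1 - u2)"
    unfolding es_def \<sigma>_def a1(3) a2(3) by (simp add: algebra_simps)
  moreover have "a1 * norm (u1 - u2) \<le> L1 / 2 * (1 / 100)"
    using a1(1,2) du by (intro mult_mono) simp_all
  ultimately have es: "norm es \<le> 3 * L1 / 200"
    using norm_triangle_ineq4[of "x1 - x2" "a1 *\<^sub>R (u1 - u2)"] assms(5) a1(1)
    unfolding L1_def dist_norm by simp
  have "norm (L1 *\<^sub>R (u1 - u2)) = L1 * norm (u1 - u2)"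
    using \<open>0 < L1\<close> by simp
  also have "\<dots> \<le> L1 * (1 / 100)"
    using \<open>0 < L1\<close> du by (intro mult_left_mono) simp_all
  finally have "norm (L1 *\<^sub>R (u1 - u2)) \<le> L1 / 100"
    by simp
  moreover have "t1 = s1 + L1 *\<^sub>R u1"
    unfolding L1_def u1_def by (simp flip: diff_eq_dist_scaleR_sgn)
  then have "et = es + L1 *\<^sub>R (u1 - u2)"
    unfolding et_def es_def by (simp add: algebra_simps)
  then have "norm et \<le> norm es + norm (L1 *\<^sub>R (u1 - u2))"
    by (simp only: norm_triangle_ineq)
  ultimately have "norm et \<le> L1 / 40"
    using es by linarith
  moreover have "- L1 / 2 \<le> \<sigma>" "\<sigma> \<le> L2 / 2"
    using a1 a2 unfolding \<sigma>_def by linarith+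
  moreover have "s1 = s2 + \<sigma> *\<^sub>R u2 + es" "t1 = s2 + (\<sigma> + L1) *\<^sub>R u2 + et"
    unfolding es_def et_def by simp_all
  ultimately show ?thesis
    using that es unfolding L1_def L2_def u2_def by blast
qed

lemma nearly_parallel_half_segments_endpoints_close:
  fixes s1 t1 s2 t2 x1 x2 :: "'a::real_normed_vector"
  assumes "s1 \<noteq> t1" "dist s1 t1 \<le> dist s2 t2"
    and "x1 \<in> closed_segment s1 (midpoint s1 t1)" "x2 \<in> closed_segment s2 (midpoint s2 t2)"
    and "dist x1 x2 \<le> dist s1 t1 / 100" "dist (sgn (t1 - s1)) (sgn (t2 - s2)) \<le> 1 / 100"
  shows "dist s1 s2 < dist s2 t2 \<and> dist s1 t2 < dist s2 t2 \<or>
    dist t1 s2 < dist s2 t2 \<and> dist t1 t2 < dist s2 t2 \<or>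
    dist s1 s2 \<le> dist s1 t1 / 10 \<and> dist t1 t2 \<le> dist s1 t1 / 10"
proof -
  define L1 L2 u2 where "L1 = dist s1 t1" and "L2 = dist s2 t2" and "u2 = sgn (t2 - s2)"
  obtain \<sigma> es et where s1: "s1 = s2 + \<sigma> *\<^sub>R u2 + es" and t1: "t1 = s2 + (\<sigma> + L1) *\<^sub>R u2 + et"
    and \<sigma>: "- L1 / 2 \<le> \<sigma>" "\<sigma> \<le> L2 / 2" and es: "norm es \<le> 3 * L1 / 200" and et: "norm et \<le> L1 / 40"
    using nearly_parallel_half_segments_coordinates[OF assms] unfolding L1_def L2_def u2_def .
  have L: "0 < L1" "L1 \<le> L2"
    using assms(1,2) unfolding L1_def L2_def by auto
  then have u2: "norm u2 = 1" and t2: "t2 = s2 + L2 *\<^sub>R u2"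
    unfolding L2_def u2_def by (auto simp: norm_sgn simp flip: diff_eq_dist_scaleR_sgn)
  \<comment> \<open>Named so that simp cannot discard their nonnegativity in the case analysis below.\<close>
  define \<rho>s \<rho>t where "\<rho>s = norm es" and "\<rho>t = norm et"
  have \<rho>: "0 \<le> \<rho>s" "\<rho>s \<le> 3 * L1 / 200" "0 \<le> \<rho>t" "\<rho>t \<le> L1 / 40"
    using es et unfolding \<rho>s_def \<rho>t_def by simp_all
  note along = dist_along_unit_vector_le[OF u2, of s2]
  have s1s2: "dist s1 s2 \<le> \<bar>\<sigma>\<bar> + \<rho>s" and s1t2: "dist s1 t2 \<le> \<bar>\<sigma> - L2\<bar> + \<rho>s"
    using along[of \<sigma> es 0] along[of \<sigma> es L2] unfolding s1[symmetric] t2[symmetric] \<rho>s_def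
    by simp_all
  have t1s2: "dist t1 s2 \<le> \<bar>\<sigma> + L1\<bar> + \<rho>t" and t1t2: "dist t1 t2 \<le> \<bar>\<sigma> + L1 - L2\<bar> + \<rho>t"
    using along[of "\<sigma> + L1" et 0] along[of "\<sigma> + L1" et L2]
    unfolding t1[symmetric] t2[symmetric] \<rho>t_def by simp_all
  have "dist s1 s2 < L2 \<and> dist s1 t2 < L2 \<or> dist t1 s2 < L2 \<and> dist t1 t2 < L2 \<or>
    dist s1 s2 \<le> L1 / 10 \<and> dist t1 t2 \<le> L1 / 10"
  proof (cases "\<sigma> + L1 < L2 - \<rho>t")
    case True
    then have "\<bar>\<sigma> + L1\<bar> = \<sigma> + L1" "\<bar>\<sigma> + L1 - L2\<bar> = L2 - (\<sigma> + L1)"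
      using \<sigma> L \<rho> by (auto simp: abs_if)
    then show ?thesis
      using t1s2 t1t2 True \<sigma> L \<rho> by auto
  next
    case far: False
    show ?thesis
    proof (cases "\<rho>s < \<sigma>")
      case True
      then have "\<bar>\<sigma>\<bar> = \<sigma>" "\<bar>\<sigma> - L2\<bar> = L2 - \<sigma>"
        using \<sigma> L \<rho> by (auto simp: abs_if)
      then show ?thesis
        using s1s2 s1t2 True \<sigma> L \<rho> by auto
    next
      case False
      then have "\<bar>\<sigma>\<bar> \<le> L1 / 40" "\<bar>\<sigma> + L1 - L2\<bar> \<le> L1 / 40"
        using far L \<rho> by (auto simp: abs_if)
      then show ?thesis
        using s1s2 t1t2 \<rho> by auto
    qed
  qed
  then show ?thesis
    unfolding L1_def L2_def .
qed

lemma shorter_pair_connected_by_no_longer_edges: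
  assumes "a \<in> X" "b \<in> X" "dist a b < dist s t"
  shows "(a, b) \<in> (edge_rel (no_longer_edges X s t))\<^sup>*"
proof (cases "a = b")
  case False
  have "{a, b} \<noteq> {s, t}"
    using assms(3) by (auto simp: doubleton_eq_iff dist_commute)
  then show ?thesis
    using assms False by (intro r_into_rtrancl) (simp add: no_longer_edges_def doubleton_in_edges_on_iff edge_len_pair)
qed simp

lemma unique_MST_no_nearly_parallel_edges:
  assumes "finite S" "\<exists>!E. is_MST S E"
    and "{s1, t1} \<in> MST S" "{s2, t2} \<in> MST S" "{s1, t1} \<noteq> {s2, t2}" "dist s1 t1 \<le> dist s2 t2"
    and "x1 \<in> closed_segment s1 (midpoint s1 t1)" "x2 \<in> closed_segment s2 (midpoint s2 t2)"
    and "dist x1 x2 \<le> dist s1 t1 / 100" "dist (sgn (t1 - s1)) (sgn (t2 - s2)) \<le> 1 / 100"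
  shows False
proof -
  let ?R = "edge_rel (no_longer_edges S s2 t2)"
  have S: "s1 \<in> S" "t1 \<in> S" "s1 \<noteq> t1" "s2 \<in> S" "t2 \<in> S"
    using assms(3,4) MST_subset_edges_on[OF assms(2)] doubleton_in_edges_on_iff by blast+
  note short = shorter_pair_connected_by_no_longer_edges[of _ S _ s2 t2]
  consider "dist s1 s2 < dist s2 t2" "dist s1 t2 < dist s2 t2"
    | "dist t1 s2 < dist s2 t2" "dist t1 t2 < dist s2 t2"
    | "dist s1 s2 \<le> dist s1 t1 / 10" "dist t1 t2 \<le> dist s1 t1 / 10"
    using nearly_parallel_half_segments_endpoints_close[OF S(3) assms(6-10)] by blast
  then have "(s2, t2) \<in> ?R\<^sup>*"
  proof cases
    case 1
    then have "(s2, s1) \<in> ?R\<^sup>*" "(s1, t2) \<in> ?R\<^sup>*"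
      using S short by (simp_all add: dist_commute)
    then show ?thesis
      by (rule rtrancl_trans)
  next
    case 2
    then have "(s2, t1) \<in> ?R\<^sup>*" "(t1, t2) \<in> ?R\<^sup>*"
      using S short by (simp_all add: dist_commute)
    then show ?thesis
      by (rule rtrancl_trans)
  next
    case 3
    have "0 < dist s1 t1"
      using S by simp
    then have "dist s1 s2 < dist s2 t2" "dist t1 t2 < dist s2 t2"
      using 3 assms(6) by linarith+
    then have "(s2, s1) \<in> ?R\<^sup>*" "(t1, t2) \<in> ?R\<^sup>*"
      using S short by (simp_all add: dist_commute)
    moreover have "(s1, t1) \<in> ?R"
      using S assms(5,6) by (simp add: no_longer_edges_def doubleton_in_edges_on_iff edge_len_pair)
    ultimately show ?thesis
      by (meson rtrancl_trans r_into_rtrancl)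
  qed
  then show False
    using MST_cycle_property[OF assms(1,2,4)] by blast
qed

section \<open>Counting long crossing edges\<close>

definition grid_cell :: "real \<Rightarrow> real^2 \<Rightarrow> int \<times> int" where
  "grid_cell h v = (\<lfloor>v$1 / h\<rfloor>, \<lfloor>v$2 / h\<rfloor>)"

lemma abs_diff_less_one_if_floor_eq: "\<lfloor>a\<rfloor> = \<lfloor>b\<rfloor> \<Longrightarrow> \<bar>a - b\<bar> < 1"
  for a b :: real
  using of_int_floor_le[of a] real_of_int_floor_add_one_gt[of a]
    of_int_floor_le[of b] real_of_int_floor_add_one_gt[of b] by linarith

lemma dist_less_if_grid_cell_eq:
  assumes "0 < h" "grid_cell h v = grid_cell h w"
  shows "dist v w < 2 * h"
proof -
  have close: "\<bar>v$i - w$i\<bar> < h" if "\<lfloor>v$i / h\<rfloor> = \<lfloor>w$i / h\<rfloor>" for i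
  proof -
    have "v$i - w$i = h * (v$i / h - w$i / h)"
      using assms(1) by (simp add: algebra_simps)
    then have "\<bar>v$i - w$i\<bar> = h * \<bar>v$i / h - w$i / h\<bar>"
      using assms(1) by (simp add: abs_mult)
    also have "\<dots> < h * 1"
      using assms(1) abs_diff_less_one_if_floor_eq[OF that] by (intro mult_strict_left_mono)
    finally show ?thesis
      by simp
  qed
  have "\<lfloor>v$1 / h\<rfloor> = \<lfloor>w$1 / h\<rfloor>" "\<lfloor>v$2 / h\<rfloor> = \<lfloor>w$2 / h\<rfloor>"
    using assms(2) unfolding grid_cell_def by simp_all
  then have "\<bar>v$1 - w$1\<bar> < h" "\<bar>v$2 - w$2\<bar> < h"
    by (simp_all only: close)
  moreover have "dist v w \<le> \<bar>v$1 - w$1\<bar> + \<bar>v$2 - w$2\<bar>"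
    using norm_le_l1_cart[of "v - w"] by (simp add: dist_norm sum_2)
  ultimately show ?thesis
    by linarith
qed

lemma grid_cell_mem_box:
  assumes "0 < h" "norm v \<le> real N * h"
  shows "grid_cell h v \<in> {- int N..int N} \<times> {- int N..int N}"
proof -
  have "\<lfloor>v$i / h\<rfloor> \<in> {- int N..int N}" for i
  proof -
    have "\<bar>v$i\<bar> \<le> real N * h"
      using component_le_norm_cart[of v i] assms(2) by linarith
    then have "- real N \<le> v$i / h" "v$i / h \<le> real N"
      using assms(1) by (simp_all add: abs_le_iff field_simps)
    then have "- int N \<le> \<lfloor>v$i / h\<rfloor>" "\<lfloor>v$i / h\<rfloor> \<le> int N"
      by (simp_all add: le_floor_iff floor_le_iff)
    then show ?thesis
      by simp
  qed
  then show ?thesis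
    unfolding grid_cell_def by simp
qed

definition anchors :: "point \<Rightarrow> point \<Rightarrow> point set \<Rightarrow> (point \<times> point \<times> point) set" where
  "anchors p q f = {(s, t, x). f = {s, t} \<and> s \<noteq> t \<and> dist p q \<le> dist s t \<and>
     x \<in> closed_segment p q \<and> x \<in> closed_segment s (midpoint s t)}"

lemma anchors_nonempty:
  assumes "f \<in> edges_on S" "dist p q \<le> edge_len f" "crosses {p, q} f"
  shows "anchors p q f \<noteq> {}"
proof -
  obtain s0 t0 where f: "f = {s0, t0}" "s0 \<noteq> t0"
    using assms(1) by (blast elim: edges_onE)
  obtain x where x: "x \<in> closed_segment p q" "x \<in> closed_segment s0 t0"
    using assms(3) unfolding f(1) crosses_def segment_convex_hull by blast
  have "dist p q \<le> dist s0 t0" "dist p q \<le> dist t0 s0"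
    using assms(2) unfolding f(1) edge_len_pair by (simp_all add: dist_commute)
  moreover have "x \<in> closed_segment s0 (midpoint s0 t0) \<or> x \<in> closed_segment t0 (midpoint t0 s0)"
    using x(2) unfolding closed_segment_eq_halves[of s0 t0] midpoint_sym[of s0 t0] by blast
  ultimately have "(s0, t0, x) \<in> anchors p q f \<or> (t0, s0, x) \<in> anchors p q f"
    using f x(1) unfolding anchors_def by (auto simp: insert_commute)
  then show ?thesis
    by blast
qed

definition anchor_cell :: "point \<Rightarrow> point \<Rightarrow> point \<times> point \<times> point \<Rightarrow> (int \<times> int) \<times> (int \<times> int)" where
  "anchor_cell p q = (\<lambda>(s, t, x). (grid_cell (dist p q / 200) (x - p), grid_cell (1 / 200) (sgn (t - s))))"

lemma anchor_cell_mem_box: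
  assumes "p \<noteq> q" "s \<noteq> t" "x \<in> closed_segment p q"
  shows "anchor_cell p q (s, t, x) \<in> ({- 200..200} \<times> {- 200..200}) \<times> ({- 200..200} \<times> {- 200..200})"
proof -
  have "norm (x - p) \<le> real 200 * (dist p q / 200)"
    using dist_in_closed_segment[OF assms(3)] by (simp add: dist_norm)
  moreover have "norm (sgn (t - s)) \<le> real 200 * (1 / 200)"
    using assms(2) by (simp add: norm_sgn)
  ultimately show ?thesis
    using grid_cell_mem_box[of "dist p q / 200" "x - p" 200] grid_cell_mem_box[of "1 / 200" "sgn (t - s)" 200]
      assms(1) unfolding anchor_cell_def by simp
qed

lemma anchor_cell_eq_imp_same_MST_edge:
  assumes "finite S" "\<exists>!E. is_MST S E" "p \<noteq> q"
    and "{s1, t1} \<in> MST S" "{s2, t2} \<in> MST S" "dist p q \<le> dist s1 t1" "dist s1 t1 \<le> dist s2 t2"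
    and "x1 \<in> closed_segment s1 (midpoint s1 t1)" "x2 \<in> closed_segment s2 (midpoint s2 t2)"
    and "anchor_cell p q (s1, t1, x1) = anchor_cell p q (s2, t2, x2)"
  shows "{s1, t1} = {s2, t2}"
proof (rule ccontr)
  assume "{s1, t1} \<noteq> {s2, t2}"
  have cells: "grid_cell (dist p q / 200) (x1 - p) = grid_cell (dist p q / 200) (x2 - p)"
    "grid_cell (1 / 200) (sgn (t1 - s1)) = grid_cell (1 / 200) (sgn (t2 - s2))"
    using assms(10) unfolding anchor_cell_def by simp_all
  have "dist (x1 - p) (x2 - p) < 2 * (dist p q / 200)"
    by (rule dist_less_if_grid_cell_eq[OF _ cells(1)]) (simp add: assms(3))
  moreover have "dist (sgn (t1 - s1)) (sgn (t2 - s2)) < 2 * (1 / 200)"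
    by (rule dist_less_if_grid_cell_eq[OF _ cells(2)]) simp
  ultimately have "dist x1 x2 \<le> dist s1 t1 / 100" "dist (sgn (t1 - s1)) (sgn (t2 - s2)) \<le> 1 / 100"
    using assms(6) by (simp_all add: dist_norm)
  then show False
    using unique_MST_no_nearly_parallel_edges[OF assms(1,2,4,5) \<open>{s1, t1} \<noteq> {s2, t2}\<close> assms(7-9)]
    by blast
qed

lemma anchor_cell_eq_imp_eq:
  assumes "finite S" "\<exists>!E. is_MST S E" "p \<noteq> q" "f1 \<in> MST S" "f2 \<in> MST S"
    and "z1 \<in> anchors p q f1" "z2 \<in> anchors p q f2" "anchor_cell p q z1 = anchor_cell p q z2"
  shows "f1 = f2"
proof -
  obtain s1 t1 x1 s2 t2 x2 where z: "z1 = (s1, t1, x1)" "z2 = (s2, t2, x2)"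
    by (cases z1, cases z2) blast
  then have a: "f1 = {s1, t1}" "dist p q \<le> dist s1 t1" "x1 \<in> closed_segment s1 (midpoint s1 t1)"
    "f2 = {s2, t2}" "dist p q \<le> dist s2 t2" "x2 \<in> closed_segment s2 (midpoint s2 t2)"
    using assms(6,7) unfolding anchors_def by auto
  note cells = assms(8)[unfolded z]
  show ?thesis
  proof (cases "dist s1 t1 \<le> dist s2 t2")
    case True
    show ?thesis
      using anchor_cell_eq_imp_same_MST_edge[OF assms(1-3) _ _ a(2) True a(3,6) cells] assms(4,5)
      unfolding a(1,4) by blast
  next
    case False
    then have "dist s2 t2 \<le> dist s1 t1"
      by simp
    then show ?thesis
      using anchor_cell_eq_imp_same_MST_edge[OF assms(1-3) _ _ a(5) _ a(6,3) cells[symmetric]] assms(4,5)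
      unfolding a(1,4) by blast
  qed
qed

lemma card_long_MST_edges_crossing_segment_le:
  assumes "finite S" "\<exists>!E. is_MST S E" "p \<noteq> q"
  shows "card {f \<in> MST S. dist p q \<le> edge_len f \<and> crosses {p, q} f} \<le> 401 ^ 4"
proof -
  define F where "F = {f \<in> MST S. dist p q \<le> edge_len f \<and> crosses {p, q} f}"
  define anchor where "anchor f = (SOME z. z \<in> anchors p q f)" for f
  have anchor: "anchor f \<in> anchors p q f" if "f \<in> F" for f
    using anchors_nonempty[of f S p q] that MST_subset_edges_on[OF assms(2)]
    unfolding anchor_def F_def by (auto simp: some_in_eq)
  have "inj_on (anchor_cell p q \<circ> anchor) F"
  proof (rule inj_onI)
    fix f1 f2 assume "f1 \<in> F" "f2 \<in> F" "(anchor_cell p q \<circ> anchor) f1 = (anchor_cell p q \<circ> anchor) f2"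
    then show "f1 = f2"
      using anchor_cell_eq_imp_eq[OF assms _ _ anchor[OF \<open>f1 \<in> F\<close>] anchor[OF \<open>f2 \<in> F\<close>]]
      unfolding F_def by simp
  qed
  define B :: "(int \<times> int) set" where "B = {- 200..200} \<times> {- 200..200}"
  have "(anchor_cell p q \<circ> anchor) ` F \<subseteq> B \<times> B"
  proof
    fix c assume "c \<in> (anchor_cell p q \<circ> anchor) ` F"
    then obtain f where "f \<in> F" "c = anchor_cell p q (anchor f)"
      by auto
    moreover obtain s t x where "anchor f = (s, t, x)"
      by (rule prod_cases3)
    moreover have "s \<noteq> t" "x \<in> closed_segment p q"
      using anchor[OF \<open>f \<in> F\<close>] \<open>anchor f = (s, t, x)\<close> unfolding anchors_def by auto
    ultimately show "c \<in> B \<times> B"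
      using anchor_cell_mem_box[OF assms(3)] unfolding B_def by simp
  qed
  have "card F = card ((anchor_cell p q \<circ> anchor) ` F)"
    using card_image[OF \<open>inj_on (anchor_cell p q \<circ> anchor) F\<close>] by (rule sym)
  also have "\<dots> \<le> card (B \<times> B)"
    using \<open>(anchor_cell p q \<circ> anchor) ` F \<subseteq> B \<times> B\<close> by (intro card_mono) (simp_all add: B_def)
  also have "\<dots> = 401 ^ 4"
    unfolding B_def by (simp add: card_cartesian_product)
  finally show ?thesis
    unfolding F_def .
qed

theorem lemma2:
  "\<exists>c::real. c > 0 \<and>
     (\<forall>P S :: point set. finite P \<longrightarrow> finite S \<longrightarrow> P \<inter> S = {} \<longrightarrow> generic (P \<union> S) \<longrightarrow>
        (\<forall>e\<in>MST P. real (card {f \<in> MST S. edge_len e \<le> edge_len f \<and> crosses e f}) \<le> c))"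
proof (intro exI[of _ "401 ^ 4"] conjI allI impI ballI)
  fix P S :: "point set" and e
  assume "finite S" "generic (P \<union> S)" "e \<in> MST P"
  then have unique: "\<exists>!E. is_MST Y E" if "Y \<subseteq> P \<union> S" for Y
    using that unfolding generic_def by blast
  obtain p q where "e = {p, q}" "p \<noteq> q"
    using \<open>e \<in> MST P\<close> MST_subset_edges_on[OF unique[of P]] by (blast elim: edges_onE)
  then show "real (card {f \<in> MST S. edge_len e \<le> edge_len f \<and> crosses e f}) \<le> 401 ^ 4"
    using card_long_MST_edges_crossing_segment_le[OF \<open>finite S\<close> unique[of S]]
    by (simp add: edge_len_pair)
qed simp

end
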